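(* Let $d\geq 2$ and let $\mathcal{A}=\{g_1,\dots,g_r\}$ with each $g_i \in SU(d)\cap M_d(\overline{\mathbb{Q}})$ (i.e. each $g_i$ is a special unitary $d\times d$ matrix all of whose entries are algebraic numbers), such that the group generated by $\mathcal{A}$ and the inverses of its elements is dense in $SU(d)$. For $U\in SU(d)$ and $\epsilon>0$ define the gate complexity $$C_\epsilon(U)=\min\Big\{\sum_{j=1}^k |n_j| : \|g_{i_1}^{n_1}g_{i_2}^{n_2}\cdots g_{i_k}^{n_k}-U\|<\epsilon\Big\},$$ the minimum being over all $k\in\mathbb{N}$, $i_j\in\{1,\dots,r\}$ and $n_1,\dots,n_k\in\mathbb{Z}$, where $\|A\|=[\mathrm{Tr}(A^\dagger A)]^{1/2}$. Then for every $U\in SU(d)$ and every $\delta>0$ there exist $U'\in SU(d)$ with $\|U-U'\|<\delta$ and a constant $D=D(\mathcal{A},U')>1$ such that $$C_\epsilon(U') > \frac{1}{\log D}\log\left(\frac{1}{\epsilon}\right)+\mathcal{O}(\epsilon^0)\quad\text{as }\epsilon\to 0,$$ i.e. there is a constant $c$ such that $C_\epsilon(U') > \frac{1}{\log D}\log(1/\epsilon)+c$ for all sufficiently small $\epsilon>0$.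
   Context: $\overline{\mathbb{Q}}$ denotes the field of algebraic numbers and $M_d(\overline{\mathbb{Q}})$ the set of $d\times d$ matrices with entries in $\overline{\mathbb{Q}}$. *)

theory Defs
  imports "HOL-Analysis.Analysis" "HOL-Computational_Algebra.Polynomial"
begin

type_synonym 'n cmat = "complex^'n^'n"

definition adjoint_mat :: "'n::finite cmat \<Rightarrow> 'n cmat" where
  "adjoint_mat A = (\<chi> i j. cnj (A $ j $ i))"

definition hs_norm :: "'n::finite cmat \<Rightarrow> real" where
  "hs_norm A = sqrt (Re (trace (adjoint_mat A ** A)))"

text \<open>Special unitary group SU(d), d = CARD('n).\<close>
definition SU :: "'n::finite cmat set" where
  "SU = {A. adjoint_mat A ** A = mat 1 \<and> det A = 1}"

definition algebraic_mat :: "'n::finite cmat \<Rightarrow> bool" where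
  "algebraic_mat A \<longleftrightarrow> (\<forall>i j. algebraic (A $ i $ j))"

definition mat_ipow :: "'n::finite cmat \<Rightarrow> int \<Rightarrow> 'n cmat" where
  "mat_ipow g n = (if n \<ge> 0 then ((\<lambda>M. g ** M) ^^ nat n) (mat 1)
                   else ((\<lambda>M. matrix_inv g ** M) ^^ nat (- n)) (mat 1))"

text \<open>A word is a list of pairs (i, n) standing for g_i^n; its value is the ordered product.\<close>
definition word_val :: "'n::finite cmat list \<Rightarrow> (nat \<times> int) list \<Rightarrow> 'n cmat" where
  "word_val gs w = foldr (\<lambda>(i, n) M. mat_ipow (gs ! i) n ** M) w (mat 1)"

definition valid_word :: "'n::finite cmat list \<Rightarrow> (nat \<times> int) list \<Rightarrow> bool" where
  "valid_word gs w \<longleftrightarrow> (\<forall>(i, n) \<in> set w. i < length gs)"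

definition word_cost :: "(nat \<times> int) list \<Rightarrow> nat" where
  "word_cost w = sum_list (map (\<lambda>(i, n). nat \<bar>n\<bar>) w)"

definition generated_group :: "'n::finite cmat list \<Rightarrow> 'n cmat set" where
  "generated_group gs = {word_val gs w | w. valid_word gs w}"

definition gate_complexity :: "'n::finite cmat list \<Rightarrow> real \<Rightarrow> 'n cmat \<Rightarrow> nat" where
  "gate_complexity gs eps U =
     (LEAST c. \<exists>w. valid_word gs w \<and> word_cost w = c \<and> hs_norm (word_val gs w - U) < eps)"

end

theory Submission
  imports Defs
begin

(* Words of gate cost c take at most (2r)^c values. Along the curve
   U(t) = U diag(e^(it), e^(-it), 1, ..., 1) one has |t - s| \<le> 2 |U(t) - U(s)|, so the
   parameters t for which U(t) lies within kappa D^(-c) of some word of cost c are covered by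
   (2r)^c intervals of length 8 kappa D^(-c). For D = 2(2r + 1) and kappa small these
   intervals, over all c, have total length less than that of the parameter interval, so some
   U' = U(t) satisfies |w - U'| \<ge> kappa D^(-cost w) for every word w; any
   eps-approximation of U' then costs more than log(kappa/eps) / log D.
   Density only serves to make the minimum defining C_eps exist. *)

lemma hs_norm_eq_norm: "hs_norm (A::'n::finite cmat) = norm A"
proof -
  have "Re (trace (adjoint_mat A ** A)) =
      (\<Sum>i\<in>UNIV. \<Sum>k\<in>UNIV. (cmod (A$k$i))\<^sup>2)"
    by (simp add: trace_def adjoint_mat_def matrix_matrix_mult_def Re_sum
        complex_mult_cnj cmod_power2 power2_eq_square[symmetric] del: of_real_power)
  also have "\<dots> = (\<Sum>k\<in>UNIV. \<Sum>i\<in>UNIV. (cmod (A$k$i))\<^sup>2)"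
    by (rule sum.swap)
  also have "\<dots> = (\<Sum>k\<in>UNIV. (norm (A$k))\<^sup>2)"
    by (simp add: norm_vec_def L2_set_def sum_nonneg)
  finally show ?thesis
    by (simp add: hs_norm_def norm_vec_def L2_set_def)
qed

lemma adjoint_mat_mult: "adjoint_mat (A ** B) = adjoint_mat B ** adjoint_mat (A::'n::finite cmat)"
  by (simp add: adjoint_mat_def matrix_matrix_mult_def vec_eq_iff mult.commute)

lemma matrix_diff_ldistrib: "(A::'n::finite cmat) ** (B - C) = A ** B - A ** C"
  by (simp add: matrix_matrix_mult_def vec_eq_iff sum_subtractf right_diff_distrib)

lemma norm_unitary_mult:
  assumes "adjoint_mat U ** U = mat 1"
  shows "norm (U ** X) = norm (X::'n::finite cmat)"
proof -
  have "adjoint_mat (U ** X) ** (U ** X) = adjoint_mat X ** (adjoint_mat U ** U) ** X"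
    by (simp add: adjoint_mat_mult matrix_mul_assoc)
  then show ?thesis
    by (simp add: assms hs_norm_def flip: hs_norm_eq_norm)
qed

lemma SU_mult_closed:
  assumes "A \<in> SU" "B \<in> SU"
  shows "A ** B \<in> (SU::'n::finite cmat set)"
proof -
  have "adjoint_mat (A ** B) ** (A ** B) = adjoint_mat B ** (adjoint_mat A ** A) ** B"
    by (simp add: adjoint_mat_mult matrix_mul_assoc)
  then show ?thesis
    using assms by (simp add: SU_def det_mul)
qed

definition diag_mat :: "('n::finite \<Rightarrow> complex) \<Rightarrow> 'n cmat" where
  "diag_mat f = (\<chi> i j. if i = j then f i else 0)"

lemma diag_mat_diff: "diag_mat f - diag_mat g = diag_mat (\<lambda>k. f k - g k)"
  by (simp add: diag_mat_def vec_eq_iff)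

lemma mat_1_eq_diag_mat: "mat 1 = diag_mat (\<lambda>_. 1)"
  by (simp add: diag_mat_def mat_def)

lemma diag_mat_mult: "diag_mat f ** diag_mat g = diag_mat (\<lambda>k. f k * g k)"
proof -
  have "(\<Sum>k\<in>UNIV. (if i = k then f i else 0) * (if k = j then g k else 0)) =
      (\<Sum>k\<in>UNIV. if k = i then (if i = j then f i * g i else 0) else 0)" for i j
    by (intro sum.cong) auto
  then have "(\<Sum>k\<in>UNIV. (if i = k then f i else 0) * (if k = j then g k else 0)) =
      (if i = j then f i * g i else 0)" for i j
    by simp
  then show ?thesis
    by (simp add: diag_mat_def matrix_matrix_mult_def vec_eq_iff)
qed

lemma adjoint_diag_mat: "adjoint_mat (diag_mat f) = diag_mat (\<lambda>k. cnj (f k))"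
  by (simp add: diag_mat_def adjoint_mat_def vec_eq_iff)

lemma norm_diag_mat:
  fixes f :: "'n::finite \<Rightarrow> complex"
  shows "norm (diag_mat f) = norm (vec_lambda f)"
proof -
  have "diag_mat f $ k = axis k (f k)" for k
    by (simp add: diag_mat_def axis_def vec_eq_iff eq_commute)
  moreover have "norm (axis k z) = norm z" for k :: 'n and z :: complex
    by (simp add: norm_vec_def L2_set_def axis_def if_distrib[of norm] if_distrib[of power2]
        cong: if_cong)
  ultimately show ?thesis
    unfolding norm_vec_def[of "diag_mat f"] norm_vec_def[of "vec_lambda f"] by simp
qed

lemma diag_mat_in_SU:
  assumes "\<And>k. cmod (f k) = 1" and "prod f UNIV = 1"
  shows "diag_mat f \<in> SU"
proof -
  have "cnj (f k) * f k = 1" for k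
    using complex_norm_square[of "f k"] assms(1)[of k] by (simp add: mult.commute)
  moreover have "det (diag_mat f) = prod f UNIV"
    by (subst det_diagonal) (simp_all add: diag_mat_def)
  ultimately show ?thesis
    using assms(2) by (simp add: SU_def adjoint_diag_mat diag_mat_mult flip: mat_1_eq_diag_mat)
qed

lemma sin_ge_half:
  assumes "0 \<le> y" "y \<le> (1::real)"
  shows "y / 2 \<le> sin y"
proof (cases "y = 0")
  case False
  then have "0 < y"
    using assms by simp
  from MVT2[OF this, of sin cos]
  obtain z where z: "0 < z" "z < y" "sin y - sin 0 = (y - 0) * cos z"
    by (auto intro: DERIV_sin)
  have "cos (pi/3) \<le> cos z"
    using z assms pi_gt3 by (intro cos_monotone_0_pi_le) auto
  then have "1/2 \<le> cos z"
    by (simp add: cos_60)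
  then show ?thesis
    using z \<open>0 < y\<close> by (simp add: mult_left_mono[of "1/2" "cos z" y, simplified])
qed simp

lemma abs_sin_ge_half:
  assumes "\<bar>y\<bar> \<le> (1::real)"
  shows "\<bar>y\<bar> / 2 \<le> \<bar>sin y\<bar>"
  using sin_ge_half[of y] sin_ge_half[of "- y"] assms by (cases "0 \<le> y") auto

lemma norm_exp_i_diff_ge:
  assumes "\<bar>t - s\<bar> \<le> 2"
  shows "\<bar>t - s\<bar> / 2 \<le> cmod (exp (\<i> * of_real t) - exp (\<i> * of_real s))"
proof -
  have "exp (\<i> * of_real t) - exp (\<i> * of_real s) =
      exp (\<i> * of_real s) * (exp (\<i> * of_real (t - s)) - 1)"
    by (simp add: algebra_simps flip: exp_add)
  then have "cmod (exp (\<i> * of_real t) - exp (\<i> * of_real s)) = 2 * \<bar>sin ((t - s) / 2)\<bar>"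
    using dist_exp_i_1[of "t - s"] by (simp add: norm_mult del: of_real_diff)
  moreover have "\<bar>t - s\<bar> / 4 \<le> \<bar>sin ((t - s) / 2)\<bar>"
    using abs_sin_ge_half[of "(t - s) / 2"] assms by simp
  ultimately show ?thesis
    by simp
qed

lemma norm_1_minus_exp_i_le: "cmod (1 - exp (\<i> * of_real t)) \<le> \<bar>t\<bar>"
proof -
  have "cmod (1 - exp (\<i> * of_real t)) = 2 * \<bar>sin (t / 2)\<bar>"
    using dist_exp_i_1[of t] by (simp add: norm_minus_commute)
  also have "\<dots> \<le> \<bar>t\<bar>"
    using abs_sin_x_le_abs_x[of "t / 2"] by simp
  finally show ?thesis .
qed

definition phase_entry :: "'n \<Rightarrow> 'n \<Rightarrow> real \<Rightarrow> 'n \<Rightarrow> complex" where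
  "phase_entry a b t k =
     (if k = a then exp (\<i> * of_real t) else if k = b then exp (\<i> * of_real (- t)) else 1)"

definition phase_mat :: "'n::finite \<Rightarrow> 'n \<Rightarrow> real \<Rightarrow> 'n cmat" where
  "phase_mat a b t = diag_mat (phase_entry a b t)"

lemma phase_mat_in_SU:
  assumes "a \<noteq> b"
  shows "phase_mat a b t \<in> SU"
  unfolding phase_mat_def
proof (rule diag_mat_in_SU)
  show "cmod (phase_entry a b t k) = 1" for k
    by (simp add: phase_entry_def)
  have "prod (phase_entry a b t) UNIV = prod (phase_entry a b t) {a, b}"
    by (rule prod.mono_neutral_right) (auto simp: phase_entry_def)
  also have "\<dots> = 1"
    using assms by (simp add: phase_entry_def flip: exp_add)
  finally show "prod (phase_entry a b t) UNIV = 1" .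
qed

lemma norm_mat_1_minus_phase_mat_le:
  "norm (mat 1 - phase_mat a b t) \<le> real CARD('n) * \<bar>t\<bar>" for a b :: "'n::finite"
proof -
  let ?g = "\<lambda>k. 1 - phase_entry a b t k"
  have "norm (mat 1 - phase_mat a b t) = norm (vec_lambda ?g)"
    by (simp add: phase_mat_def mat_1_eq_diag_mat diag_mat_diff norm_diag_mat)
  also have "\<dots> = L2_set (\<lambda>k. cmod (?g k)) UNIV"
    by (simp add: norm_vec_def)
  also have "\<dots> \<le> (\<Sum>k\<in>UNIV. cmod (?g k))"
    by (rule L2_set_le_sum) simp
  also have "\<dots> \<le> (\<Sum>k\<in>(UNIV::'n set). \<bar>t\<bar>)"
    using norm_1_minus_exp_i_le[of t] norm_1_minus_exp_i_le[of "- t"]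
    by (intro sum_mono) (auto simp: phase_entry_def)
  finally show ?thesis
    by simp
qed

lemma norm_phase_mat_diff_ge:
  assumes "\<bar>t - s\<bar> \<le> 2"
  shows "\<bar>t - s\<bar> / 2 \<le> norm (phase_mat a b t - phase_mat a b s)"
proof -
  have "\<bar>t - s\<bar> / 2 \<le> cmod ((phase_mat a b t - phase_mat a b s) $ a $ a)"
    using norm_exp_i_diff_ge[OF assms] by (simp add: phase_mat_def diag_mat_def phase_entry_def)
  also have "\<dots> \<le> norm ((phase_mat a b t - phase_mat a b s) $ a)"
    by (rule Finite_Cartesian_Product.norm_nth_le)
  also have "\<dots> \<le> norm (phase_mat a b t - phase_mat a b s)"
    by (rule Finite_Cartesian_Product.norm_nth_le)
  finally show ?thesis .
qed

lemma dist_unitary_mult_phase_mat_ge: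
  assumes "adjoint_mat U ** U = mat 1" "\<bar>t - s\<bar> \<le> 2"
  shows "\<bar>t - s\<bar> \<le> 2 * dist (U ** phase_mat a b t) (U ** phase_mat a b s)"
proof -
  have "\<bar>t - s\<bar> / 2 \<le> norm (phase_mat a b t - phase_mat a b s)"
    using assms(2) by (rule norm_phase_mat_diff_ge)
  also have "\<dots> = dist (U ** phase_mat a b t) (U ** phase_mat a b s)"
    by (simp add: dist_norm norm_unitary_mult[OF assms(1)] flip: matrix_diff_ldistrib)
  finally show ?thesis
    by simp
qed

lemma hs_norm_diff_unitary_mult_phase_mat_le:
  fixes U :: "'n::finite cmat"
  assumes "adjoint_mat U ** U = mat 1"
  shows "hs_norm (U - U ** phase_mat a b t) \<le> real CARD('n) * \<bar>t\<bar>"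
proof -
  have "hs_norm (U - U ** phase_mat a b t) = norm (U ** (mat 1 - phase_mat a b t))"
    by (simp add: hs_norm_eq_norm matrix_diff_ldistrib)
  also have "\<dots> = norm (mat 1 - phase_mat a b t)"
    by (rule norm_unitary_mult[OF assms])
  finally show ?thesis
    using norm_mat_1_minus_phase_mat_le[of a b t] by simp
qed

definition letter_mat :: "'n::finite cmat list \<Rightarrow> nat \<times> bool \<Rightarrow> 'n cmat" where
  "letter_mat gs x = (if snd x then gs ! fst x else matrix_inv (gs ! fst x))"

definition letters_val :: "'n::finite cmat list \<Rightarrow> (nat \<times> bool) list \<Rightarrow> 'n cmat" where
  "letters_val gs xs = foldr (\<lambda>x M. letter_mat gs x ** M) xs (mat 1)"

definition word_letters :: "(nat \<times> int) list \<Rightarrow> (nat \<times> bool) list" where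
  "word_letters w = concat (map (\<lambda>(i, n). replicate (nat \<bar>n\<bar>) (i, 0 \<le> n)) w)"

definition word_vals_of_cost :: "'n::finite cmat list \<Rightarrow> nat \<Rightarrow> 'n cmat set" where
  "word_vals_of_cost gs c = {word_val gs w | w. valid_word gs w \<and> word_cost w = c}"

lemma funpow_matrix_mult_mat_1:
  fixes g M :: "'n::finite cmat"
  shows "((\<lambda>M. g ** M) ^^ k) (mat 1) ** M = ((\<lambda>M. g ** M) ^^ k) M"
  by (induction k) (simp_all, metis matrix_mul_assoc)

lemma mat_ipow_mult_eq_foldr:
  fixes M :: "'n::finite cmat"
  shows "mat_ipow (gs ! i) n ** M =
    foldr (\<lambda>x M. letter_mat gs x ** M) (replicate (nat \<bar>n\<bar>) (i, 0 \<le> n)) M"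
  by (simp add: mat_ipow_def letter_mat_def foldr_replicate funpow_matrix_mult_mat_1)

lemma letters_val_word_letters:
  fixes gs :: "'n::finite cmat list"
  shows "letters_val gs (word_letters w) = word_val gs w"
proof -
  have "foldr (\<lambda>x M. letter_mat gs x ** M) (word_letters w) M =
      foldr (\<lambda>(i, n) M. mat_ipow (gs ! i) n ** M) w M" for M :: "'n cmat"
    by (induction w arbitrary: M) (auto simp: word_letters_def mat_ipow_mult_eq_foldr)
  then show ?thesis
    by (simp add: letters_val_def word_val_def)
qed

lemma length_word_letters: "length (word_letters w) = word_cost w"
  by (induction w) (auto simp: word_letters_def word_cost_def)

lemma set_word_letters_subset:
  "valid_word gs w \<Longrightarrow> set (word_letters w) \<subseteq> {..<length gs} \<times> UNIV"
  by (auto simp: word_letters_def valid_word_def)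

lemma word_vals_of_cost_subset:
  "word_vals_of_cost gs c \<subseteq>
     letters_val gs ` {xs. set xs \<subseteq> {..<length gs} \<times> UNIV \<and> length xs = c}"
proof
  fix M
  assume "M \<in> word_vals_of_cost gs c"
  then obtain w where "valid_word gs w" "word_cost w = c" "M = word_val gs w"
    by (auto simp: word_vals_of_cost_def)
  then show "M \<in> letters_val gs ` {xs. set xs \<subseteq> {..<length gs} \<times> UNIV \<and> length xs = c}"
    by (intro image_eqI[of _ _ "word_letters w"])
      (simp_all add: letters_val_word_letters length_word_letters set_word_letters_subset)
qed

lemma finite_word_vals_of_cost: "finite (word_vals_of_cost gs c)"
  by (rule finite_subset[OF word_vals_of_cost_subset]) (simp add: finite_lists_length_eq)

lemma card_word_vals_of_cost_le: "card (word_vals_of_cost gs c) \<le> (2 * length gs) ^ c"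
proof -
  have "card (word_vals_of_cost gs c) \<le>
      card (letters_val gs ` {xs. set xs \<subseteq> {..<length gs} \<times> UNIV \<and> length xs = c})"
    by (intro card_mono finite_imageI word_vals_of_cost_subset) (simp add: finite_lists_length_eq)
  also have "\<dots> \<le> card {xs. set xs \<subseteq> {..<length gs} \<times> (UNIV::bool set) \<and> length xs = c}"
    by (rule card_image_le) (simp add: finite_lists_length_eq)
  also have "\<dots> = (2 * length gs) ^ c"
    by (simp add: card_lists_length_eq card_cartesian_product mult.commute)
  finally show ?thesis .
qed

lemma exists_point_avoiding_small_sets:
  fixes S :: "nat \<Rightarrow> 'i \<Rightarrow> real set" and F :: "nat \<Rightarrow> 'i set" and d :: "nat \<Rightarrow> real"
  assumes fin: "\<And>c. finite (F c)"
    and d_nonneg: "\<And>c. 0 \<le> d c"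
    and diam: "\<And>c x t s. x \<in> F c \<Longrightarrow> t \<in> S c x \<Longrightarrow> s \<in> S c x \<Longrightarrow> \<bar>t - s\<bar> \<le> d c"
    and summable: "summable (\<lambda>c. real (card (F c)) * d c)"
    and small: "2 * (\<Sum>c. real (card (F c)) * d c) < b - a"
  shows "\<exists>t\<in>{a..b}. \<forall>c. \<forall>x\<in>F c. t \<notin> S c x"
proof (rule ccontr)
  define J where "J c x = (if S c x = {} then {} else cball (SOME t. t \<in> S c x) (d c))"
    for c x
  assume no_avoiding_point: "\<not> ?thesis"
  have cover: "{a..b} \<subseteq> (\<Union>c. \<Union>x\<in>F c. J c x)"
  proof
    fix t
    assume "t \<in> {a..b}"
    with no_avoiding_point obtain c x where x: "x \<in> F c" "t \<in> S c x"
      by blast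
    then have "(SOME t. t \<in> S c x) \<in> S c x"
      by (intro someI)
    then have "t \<in> J c x"
      using diam x by (auto simp: J_def dist_real_def)
    then show "t \<in> (\<Union>c. \<Union>x\<in>F c. J c x)"
      using x by blast
  qed
  have J_sets: "J c x \<in> sets lborel" for c x
    by (simp add: J_def)
  have "emeasure lborel (\<Union>x\<in>F c. J c x) \<le> (\<Sum>x\<in>F c. emeasure lborel (J c x))" for c
    using fin J_sets by (intro emeasure_subadditive_finite) auto
  also have "\<dots> c \<le> (\<Sum>x\<in>F c. ennreal (2 * d c))" for c
    using d_nonneg[of c]
    by (intro sum_mono) (simp add: J_def cball_eq_atLeastAtMost emeasure_lborel_Icc_eq)
  also have "\<dots> c = ennreal (2 * (real (card (F c)) * d c))" for c
    using d_nonneg[of c]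
    by (simp add: ennreal_of_nat_eq_real_of_nat ennreal_mult' mult.left_commute)
  finally have layer_le:
    "emeasure lborel (\<Union>x\<in>F c. J c x) \<le> ennreal (2 * (real (card (F c)) * d c))" for c .
  have total_nonneg: "0 \<le> 2 * (\<Sum>c. real (card (F c)) * d c)"
    using summable d_nonneg by (simp add: suminf_nonneg)
  then have "ennreal (b - a) = emeasure lborel {a..b}"
    using small by simp
  also have "\<dots> \<le> emeasure lborel (\<Union>c. \<Union>x\<in>F c. J c x)"
  proof (rule emeasure_mono[OF cover])
    have "(\<Union>x\<in>F c. J c x) \<in> sets lborel" for c
      using fin J_sets by (intro sets.finite_UN) auto
    then show "(\<Union>c. \<Union>x\<in>F c. J c x) \<in> sets lborel"
      by (intro sets.countable_UN[of _ UNIV]) auto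
  qed
  also have "\<dots> \<le> (\<Sum>c. emeasure lborel (\<Union>x\<in>F c. J c x))"
    using fin J_sets by (intro emeasure_subadditive_countably) auto
  also have "\<dots> \<le> (\<Sum>c. ennreal (2 * (real (card (F c)) * d c)))"
    by (intro suminf_le layer_le) auto
  also have "\<dots> = ennreal (2 * (\<Sum>c. real (card (F c)) * d c))"
    using d_nonneg by (intro suminf_ennreal_eq sums_mult summable_sums[OF summable]) simp
  finally show False
    using small ennreal_le_iff[OF total_nonneg] by simp
qed

lemma exists_badly_approximable_point:
  fixes V :: "real \<Rightarrow> 'a::metric_space" and S :: "nat \<Rightarrow> 'a set" and K :: nat
  assumes "a < b" "0 < L"
    and co_lipschitz:
      "\<And>t s. t \<in> {a..b} \<Longrightarrow> s \<in> {a..b} \<Longrightarrow> \<bar>t - s\<bar> \<le> L * dist (V t) (V s)"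
    and fin: "\<And>c. finite (S c)"
    and card: "\<And>c. card (S c) \<le> K ^ c"
  shows "\<exists>t\<in>{a..b}. \<exists>\<kappa>>0. \<exists>D>1. \<forall>c. \<forall>M\<in>S c. \<kappa> / D ^ c \<le> dist (V t) M"
proof -
  define D where "D = 2 * (real K + 1)"
  define \<kappa> where "\<kappa> = (b - a) / (16 * L)"
  define r where "r c = \<kappa> / D ^ c" for c
  define B where "B c M = {t\<in>{a..b}. dist (V t) M < r c}" for c M
  have \<kappa>: "0 < \<kappa>" and D: "1 < D"
    using assms(1,2) by (simp_all add: \<kappa>_def D_def)
  have r_nonneg: "0 \<le> r c" for c
    using \<kappa> D by (simp add: r_def)
  have diam: "\<bar>t - s\<bar> \<le> 2 * L * r c"
    if "t \<in> B c M" "s \<in> B c M" for c M t s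
  proof -
    have "\<bar>t - s\<bar> \<le> L * dist (V t) (V s)"
      using that co_lipschitz by (simp add: B_def)
    also have "\<dots> \<le> L * (dist (V t) M + dist (V s) M)"
      using assms(2) dist_triangle2 by (intro mult_left_mono) auto
    also have "\<dots> \<le> 2 * L * r c"
      using that assms(2) by (simp add: B_def mult_left_mono)
    finally show ?thesis .
  qed
  have layer_le: "real (card (S c)) * (2 * L * r c) \<le> 2 * L * \<kappa> * (1/2) ^ c" for c
  proof -
    have "real (card (S c)) * (2 * L * r c) \<le> real K ^ c * (2 * L * r c)"
      using card[of c] assms(2) r_nonneg[of c]
      by (intro mult_right_mono) (simp_all add: of_nat_mono flip: of_nat_power)
    also have "\<dots> = 2 * L * \<kappa> * (real K / (real K + 1)) ^ c * (1/2) ^ c"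
      unfolding r_def D_def power_mult_distrib power_divide by (simp add: ac_simps)
    also have "\<dots> \<le> 2 * L * \<kappa> * 1 * (1/2) ^ c"
      using assms(2) \<kappa> by (intro mult_right_mono mult_left_mono power_le_one) simp_all
    finally show ?thesis
      by simp
  qed
  have geometric: "(\<lambda>c. 2 * L * \<kappa> * (1/2) ^ c) sums (4 * L * \<kappa>)"
    using sums_mult[OF geometric_sums[of "1/2::real"], of "2 * L * \<kappa>"]
    by (simp add: mult.assoc)
  have summable: "summable (\<lambda>c. real (card (S c)) * (2 * L * r c))"
    using layer_le assms(2) r_nonneg
    by (intro summable_comparison_test[OF _ sums_summable[OF geometric]]) auto
  have "(\<Sum>c. real (card (S c)) * (2 * L * r c)) \<le> 4 * L * \<kappa>"
    using suminf_le[OF layer_le summable sums_summable[OF geometric]] sums_unique[OF geometric]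
    by simp
  then have "2 * (\<Sum>c. real (card (S c)) * (2 * L * r c)) < b - a"
    using assms(1,2) by (simp add: \<kappa>_def)
  then have "\<exists>t\<in>{a..b}. \<forall>c. \<forall>M\<in>S c. t \<notin> B c M"
    using fin assms(2) r_nonneg diam summable
    by (intro exists_point_avoiding_small_sets[where d = "\<lambda>c. 2 * L * r c"]) auto
  then obtain t where "t \<in> {a..b}" "\<forall>c. \<forall>M\<in>S c. t \<notin> B c M"
    by blast
  then have "\<forall>c. \<forall>M\<in>S c. \<kappa> / D ^ c \<le> dist (V t) M"
    by (auto simp: B_def r_def not_less)
  then show ?thesis
    using \<open>t \<in> {a..b}\<close> \<kappa> D by blast
qed

definition badly_approximable :: "'n::finite cmat list \<Rightarrow> real \<Rightarrow> real \<Rightarrow> 'n cmat \<Rightarrow> bool" where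
  "badly_approximable gs \<kappa> D U \<longleftrightarrow>
     (\<forall>w. valid_word gs w \<longrightarrow> \<kappa> / D ^ word_cost w \<le> hs_norm (word_val gs w - U))"

lemma badly_approximableI:
  assumes "\<And>c M. M \<in> word_vals_of_cost gs c \<Longrightarrow> \<kappa> / D ^ c \<le> dist U M"
  shows "badly_approximable gs \<kappa> D U"
  unfolding badly_approximable_def
proof (intro allI impI)
  fix w
  assume "valid_word gs w"
  then have "\<kappa> / D ^ word_cost w \<le> dist U (word_val gs w)"
    by (intro assms) (auto simp: word_vals_of_cost_def)
  then show "\<kappa> / D ^ word_cost w \<le> hs_norm (word_val gs w - U)"
    by (simp add: hs_norm_eq_norm dist_norm norm_minus_commute)
qed

lemma gate_complexity_attained:
  assumes "U \<in> closure (generated_group gs)" "0 < eps"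
  shows "\<exists>w. valid_word gs w \<and> word_cost w = gate_complexity gs eps U \<and>
    hs_norm (word_val gs w - U) < eps"
proof -
  obtain M where "M \<in> generated_group gs" "dist M U < eps"
    using assms closure_approachable by metis
  then have "\<exists>c w. valid_word gs w \<and> word_cost w = c \<and> hs_norm (word_val gs w - U) < eps"
    by (auto simp: generated_group_def dist_norm hs_norm_eq_norm)
  then show ?thesis
    unfolding gate_complexity_def by (rule LeastI_ex)
qed

lemma gate_complexity_gt_log:
  assumes "U \<in> closure (generated_group gs)" "badly_approximable gs \<kappa> D U"
    and "0 < \<kappa>" "1 < D" "0 < eps"
  shows "1 / ln D * ln (1 / eps) + ln \<kappa> / ln D < real (gate_complexity gs eps U)"
proof -
  define C where "C = gate_complexity gs eps U"
  obtain w where "valid_word gs w" "word_cost w = C" "hs_norm (word_val gs w - U) < eps"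
    using gate_complexity_attained[OF assms(1,5)] by (auto simp: C_def)
  then have "\<kappa> / D ^ C < eps"
    using assms(2) by (fastforce simp: badly_approximable_def)
  then have "ln (\<kappa> / D ^ C) < ln eps"
    using assms(3-5) by simp
  then have "ln \<kappa> - ln eps < real C * ln D"
    using assms(3,4) by (simp add: ln_div ln_realpow)
  then show ?thesis
    using assms(4,5) by (simp add: C_def ln_div field_simps)
qed

lemma exists_nearby_badly_approximable:
  fixes gs :: "'n::finite cmat list"
  assumes "CARD('n) \<ge> 2" "U \<in> SU" "0 < \<delta>"
  shows "\<exists>U'\<in>SU. hs_norm (U - U') < \<delta> \<and> (\<exists>\<kappa>>0. \<exists>D>1. badly_approximable gs \<kappa> D U')"
proof -
  obtain a b :: 'n where "a \<noteq> b"
    using assms(1) card_le_Suc0_iff_eq[of "UNIV::'n set"] by (auto simp: not_less_eq_eq)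
  have unitary: "adjoint_mat U ** U = mat 1"
    using assms(2) by (simp add: SU_def)
  define V where "V t = U ** phase_mat a b t" for t
  define a0 where "a0 = min 1 (\<delta> / (real CARD('n) + 1))"
  have a0: "0 < a0" "a0 \<le> 1" "real CARD('n) * a0 < \<delta>"
    using assms(3) by (auto simp: a0_def min_def field_simps)
  have co_lipschitz: "\<bar>t - s\<bar> \<le> 2 * dist (V t) (V s)"
    if "t \<in> {0..a0}" "s \<in> {0..a0}" for t s
    unfolding V_def using that a0(2) by (intro dist_unitary_mult_phase_mat_ge unitary) auto
  obtain t \<kappa> D where t: "t \<in> {0..a0}" and "0 < \<kappa>" "1 < D"
    and far: "\<forall>c. \<forall>M\<in>word_vals_of_cost gs c. \<kappa> / D ^ c \<le> dist (V t) M"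
    using exists_badly_approximable_point[OF a0(1) _ co_lipschitz finite_word_vals_of_cost[of gs]
        card_word_vals_of_cost_le[of gs]]
    by auto
  have "hs_norm (U - V t) \<le> real CARD('n) * a0"
    using hs_norm_diff_unitary_mult_phase_mat_le[OF unitary, of a b t] t
    by (auto simp: V_def intro: order_trans mult_left_mono)
  then have "hs_norm (U - V t) < \<delta>"
    using a0(3) by simp
  moreover have "badly_approximable gs \<kappa> D (V t)"
    using far by (blast intro: badly_approximableI)
  moreover have "V t \<in> SU"
    using assms(2) \<open>a \<noteq> b\<close> by (simp add: V_def SU_mult_closed phase_mat_in_SU)
  ultimately show ?thesis
    using \<open>0 < \<kappa>\<close> \<open>1 < D\<close> by blast
qed

theorem theorem1:
  fixes gs :: "('n::finite) cmat list"
  assumes "CARD('n) \<ge> 2"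
    and "\<forall>g \<in> set gs. g \<in> SU \<and> algebraic_mat g"
    and "SU \<subseteq> closure (generated_group gs)"
  shows "\<forall>U \<in> SU. \<forall>\<delta>>0. \<exists>U' \<in> SU. hs_norm (U - U') < \<delta> \<and>
           (\<exists>D>1. \<exists>c::real. \<forall>\<^sub>F eps in at_right 0.
              real (gate_complexity gs eps U') > (1 / ln D) * ln (1 / eps) + c)"
proof (intro ballI allI impI)
  fix U :: "'n cmat" and \<delta> :: real
  assume "U \<in> SU" "0 < \<delta>"
  then obtain U' \<kappa> D where U': "U' \<in> SU" "hs_norm (U - U') < \<delta>"
    and "badly_approximable gs \<kappa> D U'" "0 < \<kappa>" "1 < D"
    using exists_nearby_badly_approximable[OF assms(1)] by blast
  then have "\<forall>\<^sub>F eps in at_right 0.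
      (1 / ln D) * ln (1 / eps) + ln \<kappa> / ln D < real (gate_complexity gs eps U')"
    using assms(3) gate_complexity_gt_log eventually_at_right_less[of "0::real"]
    by (blast intro: eventually_mono)
  then show "\<exists>U'\<in>SU. hs_norm (U - U') < \<delta> \<and> (\<exists>D>1. \<exists>c. \<forall>\<^sub>F eps in at_right 0.
      real (gate_complexity gs eps U') > (1 / ln D) * ln (1 / eps) + c)"
    using U' \<open>1 < D\<close> by blast
qed

end
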